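(* Let $H$ be a complex Hilbert space, $\varphi,\psi:[0,1]\to\mathbb{R}$ continuous, $A\in\mathbb{B}(H)$ and $t\in[0,1]$. Then $$\omega_t^2(\varphi,\psi;A)\le\frac12\big(|\varphi(t)|^2+|\psi(t)|^2\big)\|A^*A+AA^*\|+|\varphi(t)\psi(t)|\,\omega\big(A^2+(A^* )^2\big).$$
   Context: $S_1(H)$ is the unit sphere of $H$, $\omega(T)=\sup_{x\in S_1(H)}|\langle Tx,x\rangle|$, and $\omega_t(\varphi,\psi;A)=\sup_{x\in S_1(H)}|\langle(\varphi(t)A+\psi(t)A^* )x,x\rangle|$. *)

theory Defs
  imports "HOL-Analysis.Analysis"
begin

class complex_hilbert = real_normed_vector + complete_space +
  fixes scaleC :: "complex \<Rightarrow> 'a \<Rightarrow> 'a"  (infixr \<open>*\<^sub>C\<close> 75)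
    and cinner :: "'a \<Rightarrow> 'a \<Rightarrow> complex"
  assumes scaleC_add_right: "a *\<^sub>C (x + y) = a *\<^sub>C x + a *\<^sub>C y"
    and scaleC_add_left: "(a + b) *\<^sub>C x = a *\<^sub>C x + b *\<^sub>C x"
    and scaleC_scaleC: "a *\<^sub>C (b *\<^sub>C x) = (a * b) *\<^sub>C x"
    and scaleC_one: "1 *\<^sub>C x = x"
    and scaleC_of_real: "complex_of_real r *\<^sub>C x = r *\<^sub>R x"
    and cinner_add_left: "cinner (x + y) z = cinner x z + cinner y z"
    and cinner_scaleC_left: "cinner (a *\<^sub>C x) y = a * cinner x y"
    and cinner_commute: "cinner y x = cnj (cinner x y)"
    and cinner_self_norm: "cinner x x = complex_of_real ((norm x)\<^sup>2)"

definition bounded_op :: "('a::complex_hilbert \<Rightarrow> 'a) \<Rightarrow> bool" where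
  "bounded_op A \<longleftrightarrow> (\<forall>x y. A (x + y) = A x + A y) \<and> (\<forall>c x. A (c *\<^sub>C x) = c *\<^sub>C A x)
     \<and> (\<exists>K. \<forall>x. norm (A x) \<le> norm x * K)"

definition adj :: "('a::complex_hilbert \<Rightarrow> 'a) \<Rightarrow> 'a \<Rightarrow> 'a" where
  "adj A = (THE B. \<forall>x y. cinner (A x) y = cinner x (B y))"

definition numrad :: "('a::complex_hilbert \<Rightarrow> 'a) \<Rightarrow> real" where
  "numrad T = (SUP x\<in>{x. norm x = 1}. cmod (cinner (T x) x))"

definition omega_t :: "(real \<Rightarrow> real) \<Rightarrow> (real \<Rightarrow> real) \<Rightarrow> ('a::complex_hilbert \<Rightarrow> 'a) \<Rightarrow> real \<Rightarrow> real" where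
  "omega_t \<phi> \<psi> A t = (SUP x\<in>{x. norm x = 1}.
      cmod (cinner (complex_of_real (\<phi> t) *\<^sub>C A x + complex_of_real (\<psi> t) *\<^sub>C adj A x) x))"

end

theory Submission
  imports Defs
begin

text \<open>For \<open>T = \<phi>(t) A + \<psi>(t) A\<^sup>*\<close> and a unit vector \<open>x\<close>, the number \<open>|\<langle>Tx, x\<rangle>|\<close> is
  bounded both by \<open>\<parallel>Tx\<parallel>\<close> and, since \<open>\<langle>Tx, x\<rangle> = \<langle>x, T\<^sup>*x\<rangle>\<close>, by \<open>\<parallel>T\<^sup>*x\<parallel>\<close>. Hence
  \<open>2 |\<langle>Tx, x\<rangle>|\<^sup>2 \<le> \<parallel>Tx\<parallel>\<^sup>2 + \<parallel>T\<^sup>*x\<parallel>\<^sup>2 = \<langle>(T\<^sup>*T + TT\<^sup>*)x, x\<rangle>\<close>, and expanding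
  \<open>T\<^sup>*T + TT\<^sup>* = (\<phi>\<^sup>2 + \<psi>\<^sup>2)(A\<^sup>*A + AA\<^sup>*) + 2\<phi>\<psi>(A\<^sup>2 + (A\<^sup>*)\<^sup>2)\<close> bounds the first part by the
  operator norm and the second by the numerical radius.

  Since the adjoint is defined by a description, its existence has to be established first:
  by the Riesz representation theorem, obtained from the vector of minimal norm on the
  closed convex hyperplane \<open>{f = 1}\<close>, which is orthogonal to the kernel of \<open>f\<close>.\<close>

lemma cinner_zero_left [simp]: "cinner (0::'a::complex_hilbert) y = 0"
  using cinner_add_left[of "0::'a" 0 y] by simp

lemma cinner_zero_right [simp]: "cinner (x::'a::complex_hilbert) 0 = 0"
  by (subst cinner_commute) simp

lemma cinner_add_right: "cinner (x::'a::complex_hilbert) (y + z) = cinner x y + cinner x z"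
  by (subst (1 2 3) cinner_commute) (simp add: cinner_add_left)

lemma cinner_minus_left [simp]: "cinner (- x::'a::complex_hilbert) y = - cinner x y"
  using cinner_add_left[of x "-x" y] by (simp add: add_eq_0_iff)

lemma cinner_minus_right [simp]: "cinner (x::'a::complex_hilbert) (- y) = - cinner x y"
  by (subst (1 2) cinner_commute) simp

lemma cinner_diff_left: "cinner (x - y::'a::complex_hilbert) z = cinner x z - cinner y z"
  using cinner_add_left[of x "-y" z] by simp

lemma cinner_diff_right: "cinner (x::'a::complex_hilbert) (y - z) = cinner x y - cinner x z"
  using cinner_add_right[of x y "-z"] by simp

lemma cinner_scaleC_right: "cinner (x::'a::complex_hilbert) (a *\<^sub>C y) = cnj a * cinner x y"
  by (subst (1 2) cinner_commute) (simp add: cinner_scaleC_left)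

lemma scaleR_eq_scaleC: "r *\<^sub>R (x::'a::complex_hilbert) = complex_of_real r *\<^sub>C x"
  by (simp add: scaleC_of_real)

lemma cinner_scaleR_left: "cinner (r *\<^sub>R x::'a::complex_hilbert) y = of_real r * cinner x y"
  by (simp add: scaleR_eq_scaleC cinner_scaleC_left)

lemma cinner_scaleR_right: "cinner (x::'a::complex_hilbert) (r *\<^sub>R y) = of_real r * cinner x y"
  by (simp add: scaleR_eq_scaleC cinner_scaleC_right)

lemma norm_sq_eq_Re_cinner: "(norm (x::'a::complex_hilbert))\<^sup>2 = Re (cinner x x)"
  by (simp add: cinner_self_norm)

lemma Re_cinner_commute: "Re (cinner (x::'a::complex_hilbert) y) = Re (cinner y x)"
  by (subst cinner_commute) simp

lemma cinner_ext:
  assumes "\<And>z. cinner z u = cinner z (v::'a::complex_hilbert)"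
  shows "u = v"
proof -
  have "Re (cinner (u - v) (u - v)) = 0"
    by (simp add: cinner_diff_right assms)
  then show ?thesis by (simp flip: norm_sq_eq_Re_cinner)
qed

lemma norm_add_scaleR_sq:
  "(norm (a *\<^sub>R u + b *\<^sub>R v))\<^sup>2
     = a\<^sup>2 * (norm (u::'a::complex_hilbert))\<^sup>2 + b\<^sup>2 * (norm v)\<^sup>2 + 2 * a * b * Re (cinner u v)"
proof -
  have "(norm (a *\<^sub>R u + b *\<^sub>R v))\<^sup>2 = a * a * Re (cinner u u) + a * b * Re (cinner u v)
      + b * a * Re (cinner v u) + b * b * Re (cinner v v)"
    by (simp add: norm_sq_eq_Re_cinner cinner_add_left cinner_add_right cinner_scaleR_left
        cinner_scaleR_right algebra_simps)
  then show ?thesis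
    by (simp add: cinner_self_norm Re_cinner_commute[of v u] power2_eq_square algebra_simps)
qed

lemma parallelogram_law:
  "(norm (x + y))\<^sup>2 + (norm (x - y))\<^sup>2 = 2 * (norm (x::'a::complex_hilbert))\<^sup>2 + 2 * (norm y)\<^sup>2"
  by (simp add: norm_sq_eq_Re_cinner cinner_diff_left cinner_diff_right cinner_add_left cinner_add_right)

lemma cauchy_schwarz: "cmod (cinner (x::'a::complex_hilbert) y) \<le> norm x * norm y"
proof (cases "y = 0")
  case True
  then show ?thesis by simp
next
  case False
  define n where "n = (norm y)\<^sup>2"
  define b where "b = cinner x y"
  have "n > 0" using False by (simp add: n_def)
  define v where "v = x - (b / n) *\<^sub>C y"
  have "cinner y x = cnj b" "cinner y y = of_real n"
    by (simp_all add: b_def n_def cinner_self_norm flip: cinner_commute)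
  then have "cinner v v = cinner x x - b * cnj b / n"
    using \<open>n > 0\<close>
    by (simp add: v_def cinner_diff_left cinner_diff_right cinner_scaleC_left cinner_scaleC_right
        mult.commute flip: b_def)
  moreover have "b * cnj b = of_real ((cmod b)\<^sup>2)"
    by (metis complex_norm_square of_real_power)
  ultimately have "Re (cinner v v) = Re (cinner x x) - (cmod b)\<^sup>2 / n"
    by (simp del: of_real_power)
  then have "(norm v)\<^sup>2 = (norm x)\<^sup>2 - (cmod b)\<^sup>2 / n"
    by (simp only: norm_sq_eq_Re_cinner)
  then have "0 \<le> (norm x)\<^sup>2 - (cmod b)\<^sup>2 / n"
    by (metis zero_le_power2)
  then have "(cmod b)\<^sup>2 \<le> (norm x * norm y)\<^sup>2"
    using \<open>n > 0\<close> by (simp add: n_def field_simps power_mult_distrib)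
  then show ?thesis
    unfolding b_def by (rule power2_le_imp_le) simp
qed

lemma Cauchy_if_dist_sq_le:
  fixes X :: "nat \<Rightarrow> 'a::metric_space"
  assumes "a \<longlonglongrightarrow> 0" and "\<And>m n. (dist (X m) (X n))\<^sup>2 \<le> a m + a n"
  shows "Cauchy X"
proof (rule metric_CauchyI)
  fix e :: real
  assume "0 < e"
  then have "0 < e\<^sup>2 / 2" by simp
  then obtain M where M: "\<And>n. n \<ge> M \<Longrightarrow> a n < e\<^sup>2 / 2"
    using assms(1) by (metis LIMSEQ_D abs_less_iff diff_zero real_norm_def)
  have "dist (X m) (X n) < e" if "m \<ge> M" "n \<ge> M" for m n
  proof (rule power_less_imp_less_base)
    show "(dist (X m) (X n))\<^sup>2 < e\<^sup>2"
      using assms(2)[of m n] M[OF \<open>m \<ge> M\<close>] M[OF \<open>n \<ge> M\<close>] by linarith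
  qed (use \<open>0 < e\<close> in simp)
  then show "\<exists>M. \<forall>m\<ge>M. \<forall>n\<ge>M. dist (X m) (X n) < e" by blast
qed

lemma exists_min_norm_point:
  fixes S :: "'a::complex_hilbert set"
  assumes "S \<noteq> {}" and "closed S" and "convex S"
  obtains x0 where "x0 \<in> S" and "\<And>y. y \<in> S \<Longrightarrow> norm x0 \<le> norm y"
proof -
  define c where "c = Inf (norm ` S)"
  have bdd: "bdd_below (norm ` S)" by (rule bdd_belowI[of _ 0]) auto
  have c_le: "c \<le> norm y" if "y \<in> S" for y
    unfolding c_def using that bdd by (simp add: cInf_lower)
  have "0 \<le> c" unfolding c_def using assms(1) by (intro cInf_greatest) auto
  have "\<exists>x\<in>S. norm x < c + inverse (real (Suc n))" for n
  proof -
    have "Inf (norm ` S) < c + inverse (real (Suc n))" by (simp add: c_def)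
    then show ?thesis by (subst (asm) cInf_less_iff) (use assms(1) bdd in auto)
  qed
  then obtain X where XS: "\<And>n. X n \<in> S" and X_less: "\<And>n. norm (X n) < c + inverse (real (Suc n))"
    by metis
  have "\<forall>\<^sub>F n in sequentially. c \<le> norm (X n)"
    "\<forall>\<^sub>F n in sequentially. norm (X n) \<le> c + inverse (real (Suc n))"
    by (intro always_eventually allI c_le XS less_imp_le[OF X_less])+
  then have "(\<lambda>n. norm (X n)) \<longlonglongrightarrow> c"
    by (rule real_tendsto_sandwich[OF _ _ tendsto_const LIMSEQ_inverse_real_of_nat_add])
  then have "(\<lambda>n. 2 * ((norm (X n))\<^sup>2 - c\<^sup>2)) \<longlonglongrightarrow> 2 * (c\<^sup>2 - c\<^sup>2)"
    by (intro tendsto_intros)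
  then have sq_lim: "(\<lambda>n. 2 * ((norm (X n))\<^sup>2 - c\<^sup>2)) \<longlonglongrightarrow> 0"
    by simp
  have "(dist (X m) (X n))\<^sup>2 \<le> 2 * ((norm (X m))\<^sup>2 - c\<^sup>2) + 2 * ((norm (X n))\<^sup>2 - c\<^sup>2)" for m n
  proof -
    have "(1/2) *\<^sub>R (X m + X n) \<in> S"
      using convexD[OF assms(3) XS[of m] XS[of n], of "1/2" "1/2"] by (simp add: scaleR_add_right)
    then have "2 * c \<le> norm (X m + X n)" using c_le by fastforce
    then have "(2 * c)\<^sup>2 \<le> (norm (X m + X n))\<^sup>2" using \<open>0 \<le> c\<close> by (intro power_mono) auto
    then show ?thesis using parallelogram_law[of "X m" "X n"] by (simp add: dist_norm power_mult_distrib)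
  qed
  then have "Cauchy X" by (rule Cauchy_if_dist_sq_le[OF sq_lim])
  then obtain x0 where lim: "X \<longlonglongrightarrow> x0" using Cauchy_convergent convergent_def by blast
  show thesis
  proof
    show "x0 \<in> S" by (rule closed_sequentially[OF assms(2) XS lim])
    have "norm x0 = c" by (rule LIMSEQ_unique[OF tendsto_norm[OF lim]]) fact
    then show "norm x0 \<le> norm y" if "y \<in> S" for y using c_le[OF that] by simp
  qed
qed

lemma Re_cinner_eq_0_if_norm_le:
  fixes x m :: "'a::complex_hilbert"
  assumes "\<And>s. norm x \<le> norm (x + s *\<^sub>R m)"
  shows "Re (cinner m x) = 0"
proof -
  define r where "r = Re (cinner m x)"
  define M where "M = (norm m)\<^sup>2"
  have "0 \<le> M" by (simp add: M_def)
  have "0 \<le> 2 * s * r + s\<^sup>2 * M" for s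
  proof -
    have "(norm x)\<^sup>2 \<le> (norm (x + s *\<^sub>R m))\<^sup>2" using assms by (intro power_mono) auto
    moreover have "(norm (x + s *\<^sub>R m))\<^sup>2 = (norm x)\<^sup>2 + 2 * s * r + s\<^sup>2 * M"
      using norm_add_scaleR_sq[of 1 x s m] by (simp add: r_def M_def Re_cinner_commute[of x m])
    ultimately show ?thesis by linarith
  qed
  moreover have "2 * (- r / (M + 1)) * r + (- r / (M + 1))\<^sup>2 * M = - (r\<^sup>2 * (M + 2)) / (M + 1)\<^sup>2"
    using \<open>0 \<le> M\<close> by (simp add: field_simps power2_eq_square add_nonneg_eq_0_iff)
  ultimately have "0 \<le> - (r\<^sup>2 * (M + 2)) / (M + 1)\<^sup>2"
    by metis
  then have "r\<^sup>2 * (M + 2) \<le> 0"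
    using \<open>0 \<le> M\<close> by (simp add: zero_le_divide_iff divide_le_0_iff)
  then show ?thesis using \<open>0 \<le> M\<close> by (simp add: r_def mult_le_0_iff)
qed

lemma cinner_eq_0_if_min_norm_on_kernel:
  fixes f :: "'a::complex_hilbert \<Rightarrow> complex"
  assumes "bounded_linear f" and f_scaleC: "\<And>c x. f (c *\<^sub>C x) = c * f x"
    and min: "\<And>y. f y = f x0 \<Longrightarrow> norm x0 \<le> norm y"
    and "f m = 0"
  shows "cinner m x0 = 0"
proof -
  interpret f: bounded_linear f by fact
  have "Re (cinner n x0) = 0" if "f n = 0" for n
    by (rule Re_cinner_eq_0_if_norm_le) (simp add: min f.add f.scaleR that)
  from this[of m] this[of "\<i> *\<^sub>C m"] show ?thesis
    using \<open>f m = 0\<close> by (simp add: f_scaleC cinner_scaleC_left complex_eq_iff)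
qed

lemma riesz_representation:
  fixes f :: "'a::complex_hilbert \<Rightarrow> complex"
  assumes "bounded_linear f" and f_scaleC: "\<And>c x. f (c *\<^sub>C x) = c * f x"
  shows "\<exists>w. \<forall>x. f x = cinner x w"
proof (cases "\<forall>x. f x = 0")
  case True
  then show ?thesis by (intro exI[of _ 0]) simp
next
  case False
  interpret f: bounded_linear f by fact
  define S where "S = f -` {1}"
  from False obtain u where "f u \<noteq> 0" by auto
  then have "(1 / f u) *\<^sub>C u \<in> S" by (simp add: S_def f_scaleC)
  moreover have "closed S"
    unfolding S_def by (intro continuous_closed_vimage closed_singleton linear_continuous_at assms(1))
  moreover have "convex S"
    unfolding S_def by (intro convex_linear_vimage convex_singleton f.linear)
  ultimately obtain x0 where "x0 \<in> S" and min: "\<And>y. y \<in> S \<Longrightarrow> norm x0 \<le> norm y"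
    using exists_min_norm_point by blast
  have "f x0 = 1" using \<open>x0 \<in> S\<close> by (simp add: S_def)
  then have "x0 \<noteq> 0" by auto
  define N where "N = (norm x0)\<^sup>2"
  have "N > 0" using \<open>x0 \<noteq> 0\<close> by (simp add: N_def)
  have min_on_level: "norm x0 \<le> norm y" if "f y = f x0" for y
    using min that by (simp add: S_def \<open>f x0 = 1\<close>)
  have "f x = cinner x ((1 / N) *\<^sub>R x0)" for x
  proof -
    have "f (x - f x *\<^sub>C x0) = 0" by (simp add: f.diff f_scaleC \<open>f x0 = 1\<close>)
    then have "cinner (x - f x *\<^sub>C x0) x0 = 0"
      using cinner_eq_0_if_min_norm_on_kernel[OF assms min_on_level] by blast
    then have "cinner x x0 = f x * N"
      by (simp add: cinner_diff_left cinner_scaleC_left cinner_self_norm N_def)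
    then show ?thesis using \<open>N > 0\<close> by (simp add: cinner_scaleR_right)
  qed
  then show ?thesis by blast
qed

lemma bounded_op_imp_bounded_linear:
  assumes "bounded_op A"
  shows "bounded_linear A"
proof -
  from assms obtain K where add: "\<And>x y. A (x + y) = A x + A y"
    and scaleC: "\<And>c x. A (c *\<^sub>C x) = c *\<^sub>C A x" and bound: "\<And>x. norm (A x) \<le> norm x * K"
    unfolding bounded_op_def by blast
  show ?thesis
    by (rule bounded_linear_intro[OF add _ bound]) (simp add: scaleR_eq_scaleC scaleC)
qed

lemma cinner_adj:
  assumes "bounded_op A"
  shows "cinner (A x) y = cinner x (adj A y)"
proof -
  have "bounded_linear A" by (rule bounded_op_imp_bounded_linear[OF assms])
  interpret A: bounded_linear A by fact
  have A_scaleC: "A (c *\<^sub>C x) = c *\<^sub>C A x" for c x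
    using assms by (simp add: bounded_op_def)
  have "\<exists>w. \<forall>x. cinner (A x) y = cinner x w" for y
  proof (rule riesz_representation)
    show "bounded_linear (\<lambda>x. cinner (A x) y)"
    proof (rule bounded_linear_intro)
      show "cmod (cinner (A x) y) \<le> norm x * (onorm A * norm y)" for x
      proof -
        have "cmod (cinner (A x) y) \<le> norm (A x) * norm y" by (rule cauchy_schwarz)
        also have "\<dots> \<le> onorm A * norm x * norm y"
          by (intro mult_right_mono onorm[OF \<open>bounded_linear A\<close>]) simp
        finally show ?thesis by (simp add: mult_ac)
      qed
    qed (simp_all add: A.add A.scaleR cinner_add_left cinner_scaleR_left scaleR_conv_of_real)
  qed (simp add: A_scaleC cinner_scaleC_left)
  then obtain B where B: "\<And>y x. cinner (A x) y = cinner x (B y)" by metis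
  have "adj A = B"
    unfolding adj_def
  proof (rule the_equality)
    show "\<forall>x y. cinner (A x) y = cinner x (B y)" using B by blast
    show "B' = B" if "\<forall>x y. cinner (A x) y = cinner x (B' y)" for B'
      using that by (intro ext cinner_ext) (simp add: B)
  qed
  then show ?thesis by (simp add: B)
qed

lemma bounded_linear_adj:
  assumes "bounded_op A"
  shows "bounded_linear (adj A)"
proof -
  have "bounded_linear A" by (rule bounded_op_imp_bounded_linear[OF assms])
  interpret A: bounded_linear A by fact
  note adj = cinner_adj[OF assms]
  show ?thesis
  proof (rule bounded_linear_intro)
    show "adj A (x + y) = adj A x + adj A y" for x y
      by (rule cinner_ext[symmetric]) (simp add: adj[symmetric] cinner_add_right)
    show "adj A (r *\<^sub>R x) = r *\<^sub>R adj A x" for r x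
      by (rule cinner_ext[symmetric]) (simp add: adj[symmetric] cinner_scaleR_right)
    show "norm (adj A y) \<le> norm y * onorm A" for y
    proof -
      have "(norm (adj A y))\<^sup>2 = Re (cinner (A (adj A y)) y)" by (simp add: norm_sq_eq_Re_cinner adj)
      also have "\<dots> \<le> norm (A (adj A y)) * norm y"
        using complex_Re_le_cmod cauchy_schwarz order_trans by blast
      also have "\<dots> \<le> onorm A * norm (adj A y) * norm y"
        by (intro mult_right_mono onorm[OF \<open>bounded_linear A\<close>]) simp
      finally have "norm (adj A y) * norm (adj A y) \<le> norm (adj A y) * (norm y * onorm A)"
        by (simp add: power2_eq_square mult_ac)
      moreover have "0 \<le> norm y * onorm A"
        using onorm_pos_le[OF \<open>bounded_linear A\<close>] by simp
      ultimately show ?thesis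
        by (cases "norm (adj A y) = 0") (auto simp: mult_le_cancel_left_pos)
    qed
  qed
qed

lemma cmod_cinner_self_le_onorm:
  assumes "bounded_linear T"
  shows "cmod (cinner (T x) x) \<le> onorm T * (norm (x::'a::complex_hilbert))\<^sup>2"
proof -
  have "cmod (cinner (T x) x) \<le> norm (T x) * norm x" by (rule cauchy_schwarz)
  also have "\<dots> \<le> onorm T * norm x * norm x" by (intro mult_right_mono onorm[OF assms]) simp
  finally show ?thesis by (simp add: power2_eq_square mult.assoc)
qed

lemma cmod_cinner_le_numrad:
  assumes "bounded_linear T" and "norm x = 1"
  shows "cmod (cinner (T x) x) \<le> numrad (T::'a::complex_hilbert \<Rightarrow> 'a)"
  unfolding numrad_def
proof (rule cSUP_upper)
  show "bdd_above ((\<lambda>x. cmod (cinner (T x) x)) ` {x. norm x = 1})"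
  proof (rule bdd_aboveI2)
    show "cmod (cinner (T y) y) \<le> onorm T" if "y \<in> {x. norm x = 1}" for y
      using cmod_cinner_self_le_onorm[OF assms(1), of y] that by simp
  qed
qed (use assms(2) in simp)

lemma numrad_sq_le:
  fixes T :: "'a::complex_hilbert \<Rightarrow> 'a"
  assumes "\<exists>x::'a. x \<noteq> 0" and bound: "\<And>x. norm x = 1 \<Longrightarrow> (cmod (cinner (T x) x))\<^sup>2 \<le> R"
  shows "(numrad T)\<^sup>2 \<le> R"
proof -
  define U where "U = {x::'a. norm x = 1}"
  from assms(1) obtain x :: 'a where "x \<noteq> 0" by blast
  then have u: "(1 / norm x) *\<^sub>R x \<in> U" by (simp add: U_def)
  have le_sqrt: "cmod (cinner (T y) y) \<le> sqrt R" if "y \<in> U" for y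
    using bound that by (simp add: U_def real_le_rsqrt)
  have "0 \<le> R"
    using bound[of "(1 / norm x) *\<^sub>R x"] u unfolding U_def
    by (simp add: order_trans[OF zero_le_power2])
  have "numrad T \<le> sqrt R"
    unfolding numrad_def U_def[symmetric] using u le_sqrt by (intro cSUP_least) auto
  moreover have "0 \<le> numrad T"
  proof -
    have "bdd_above ((\<lambda>y. cmod (cinner (T y) y)) ` U)"
      using le_sqrt by (intro bdd_aboveI2)
    then have "cmod (cinner (T ((1 / norm x) *\<^sub>R x)) ((1 / norm x) *\<^sub>R x)) \<le> numrad T"
      unfolding numrad_def U_def[symmetric] using u by (intro cSUP_upper)
    then show ?thesis by (rule order_trans[OF norm_ge_zero])
  qed
  ultimately have "(numrad T)\<^sup>2 \<le> (sqrt R)\<^sup>2" by (rule power_mono)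
  also have "\<dots> = R" using \<open>0 \<le> R\<close> by (rule real_sqrt_pow2)
  finally show ?thesis .
qed

lemma omega_t_eq_numrad:
  "omega_t \<phi> \<psi> A t = numrad (\<lambda>x. \<phi> t *\<^sub>R A x + \<psi> t *\<^sub>R adj A x)"
  unfolding omega_t_def numrad_def scaleC_of_real ..

lemma cmod_cinner_sq_le_norms:
  fixes x y z :: "'a::complex_hilbert"
  assumes "cinner y x = cinner x z"
  shows "2 * (cmod (cinner y x))\<^sup>2 \<le> (norm x)\<^sup>2 * ((norm y)\<^sup>2 + (norm z)\<^sup>2)"
proof -
  have "(cmod (cinner y x))\<^sup>2 \<le> (norm y * norm x)\<^sup>2"
    by (rule power_mono[OF cauchy_schwarz]) simp
  moreover have "(cmod (cinner y x))\<^sup>2 \<le> (norm x * norm z)\<^sup>2"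
    unfolding assms by (rule power_mono[OF cauchy_schwarz]) simp
  ultimately show ?thesis by (simp add: power_mult_distrib algebra_simps)
qed

lemma norm_sq_add_swapped_combination:
  "(norm (a *\<^sub>R u + b *\<^sub>R v))\<^sup>2 + (norm (a *\<^sub>R v + b *\<^sub>R u))\<^sup>2
     = (a\<^sup>2 + b\<^sup>2) * ((norm (u::'a::complex_hilbert))\<^sup>2 + (norm v)\<^sup>2) + 4 * a * b * Re (cinner u v)"
  by (simp add: norm_add_scaleR_sq Re_cinner_commute[of v u] algebra_simps)

lemma cmod_cinner_combination_sq_le:
  fixes A B :: "'a::complex_hilbert \<Rightarrow> 'a"
  assumes adj: "\<And>x y. cinner (A x) y = cinner x (B y)" and "norm x = 1"
  shows "(cmod (cinner (a *\<^sub>R A x + b *\<^sub>R B x) x))\<^sup>2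
    \<le> 1/2 * (a\<^sup>2 + b\<^sup>2) * Re (cinner (B (A x) + A (B x)) x) + a * b * Re (cinner (A (A x) + B (B x)) x)"
proof -
  have adj': "cinner (B x) y = cinner x (A y)" for x y
    by (subst (1 2) cinner_commute) (simp add: adj)
  have "cinner (a *\<^sub>R A x + b *\<^sub>R B x) x = cinner x (a *\<^sub>R B x + b *\<^sub>R A x)"
    by (simp add: cinner_add_left cinner_add_right cinner_scaleR_left cinner_scaleR_right adj adj')
  from cmod_cinner_sq_le_norms[OF this]
  have "2 * (cmod (cinner (a *\<^sub>R A x + b *\<^sub>R B x) x))\<^sup>2
      \<le> (a\<^sup>2 + b\<^sup>2) * ((norm (A x))\<^sup>2 + (norm (B x))\<^sup>2) + 4 * a * b * Re (cinner (A x) (B x))"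
    using \<open>norm x = 1\<close> by (simp add: norm_sq_add_swapped_combination)
  moreover have "Re (cinner (B (A x) + A (B x)) x) = (norm (A x))\<^sup>2 + (norm (B x))\<^sup>2"
    by (simp add: cinner_add_left adj adj' norm_sq_eq_Re_cinner)
  moreover have "Re (cinner (A (A x) + B (B x)) x) = 2 * Re (cinner (A x) (B x))"
    using adj[of "A x" x] adj'[of "B x" x]
    by (simp add: cinner_add_left Re_cinner_commute[of "B x" "A x"])
  ultimately show ?thesis by (simp add: algebra_simps)
qed

lemma cmod_cinner_combination_sq_le_onorm_numrad:
  fixes A :: "'a::complex_hilbert \<Rightarrow> 'a"
  assumes "bounded_op A" and "norm x = 1"
  shows "(cmod (cinner (a *\<^sub>R A x + b *\<^sub>R adj A x) x))\<^sup>2 \<le>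
     1/2 * (\<bar>a\<bar>\<^sup>2 + \<bar>b\<bar>\<^sup>2) * onorm (\<lambda>x. adj A (A x) + A (adj A x))
     + \<bar>a * b\<bar> * numrad (\<lambda>x. A (A x) + adj A (adj A x))"
proof -
  define B where "B = adj A"
  define D where "D = (\<lambda>x. B (A x) + A (B x))"
  define C where "C = (\<lambda>x. A (A x) + B (B x))"
  have A: "bounded_linear A" using \<open>bounded_op A\<close> by (rule bounded_op_imp_bounded_linear)
  have B: "bounded_linear B" using \<open>bounded_op A\<close> unfolding B_def by (rule bounded_linear_adj)
  have "bounded_linear D"
    unfolding D_def by (intro bounded_linear_add bounded_linear_compose[OF B A] bounded_linear_compose[OF A B])
  have "bounded_linear C"
    unfolding C_def by (intro bounded_linear_add bounded_linear_compose[OF A A] bounded_linear_compose[OF B B])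
  have adj: "cinner (A x) y = cinner x (B y)" for x y
    using \<open>bounded_op A\<close> unfolding B_def by (rule cinner_adj)
  have "Re (cinner (D x) x) \<le> cmod (cinner (D x) x)" by (rule complex_Re_le_cmod)
  also have "\<dots> \<le> onorm D"
    using cmod_cinner_self_le_onorm[OF \<open>bounded_linear D\<close>, of x] \<open>norm x = 1\<close> by simp
  finally have D_le: "Re (cinner (D x) x) \<le> onorm D" .
  have "a * b * Re (cinner (C x) x) \<le> \<bar>a * b\<bar> * \<bar>Re (cinner (C x) x)\<bar>"
    by (metis abs_ge_self abs_mult)
  also have "\<dots> \<le> \<bar>a * b\<bar> * numrad C"
    using abs_Re_le_cmod cmod_cinner_le_numrad[OF \<open>bounded_linear C\<close> \<open>norm x = 1\<close>]
    by (intro mult_left_mono) (auto intro: order_trans)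
  finally have C_le: "a * b * Re (cinner (C x) x) \<le> \<bar>a * b\<bar> * numrad C" .
  have "(cmod (cinner (a *\<^sub>R A x + b *\<^sub>R B x) x))\<^sup>2
      \<le> 1/2 * (a\<^sup>2 + b\<^sup>2) * Re (cinner (D x) x) + a * b * Re (cinner (C x) x)"
    unfolding D_def C_def by (rule cmod_cinner_combination_sq_le[OF adj \<open>norm x = 1\<close>])
  also have "\<dots> \<le> 1/2 * (a\<^sup>2 + b\<^sup>2) * onorm D + \<bar>a * b\<bar> * numrad C"
    using D_le C_le by (intro add_mono mult_left_mono) simp_all
  finally show ?thesis by (simp add: B_def C_def D_def)
qed

text \<open>The bound holds for every real \<open>\<phi> t\<close> and \<open>\<psi> t\<close>.\<close>

theorem theorem3p9:
  fixes A :: "'a::complex_hilbert \<Rightarrow> 'a"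
    and \<phi> \<psi> :: "real \<Rightarrow> real" and t :: real
  assumes "\<exists>x::'a. x \<noteq> 0"
    and "continuous_on {0..1} \<phi>" and "continuous_on {0..1} \<psi>"
    and "bounded_op A"
    and "t \<in> {0..1}"
  shows "(omega_t \<phi> \<psi> A t)\<^sup>2 \<le>
     1/2 * (\<bar>\<phi> t\<bar>\<^sup>2 + \<bar>\<psi> t\<bar>\<^sup>2) * onorm (\<lambda>x. adj A (A x) + A (adj A x))
     + \<bar>\<phi> t * \<psi> t\<bar> * numrad (\<lambda>x. A (A x) + adj A (adj A x))"
  unfolding omega_t_eq_numrad
  by (rule numrad_sq_le[OF assms(1) cmod_cinner_combination_sq_le_onorm_numrad[OF assms(4)]])

end
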